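(* Let $h_1,\dots,h_r\in\mathbb{R}^n$, $b_1,\dots,b_r\in\mathbb{R}$, $V_1,\dots,V_s\in\mathbb{R}^{n\times n}$, $v_1,\dots,v_s\in\mathbb{R}$, and define the polyhedra $$S=\{x\in\mathbb{R}^n \mid h_i^Tx\le b_i,\ i=1,\dots,r\},\qquad U_0=\{A\in\mathbb{R}^{n\times n}\mid \mathrm{Tr}(V_j^TA)\le v_j,\ j=1,\dots,s\}.$$ Let $A_\star\in U_0$, let $x_1,\dots,x_m\in\mathbb{R}^n$, let $y_k=A_\star x_k$ for $k=1,\dots,m$, let $U_m=\{A\in U_0\mid Ax_k=y_k,\ k=1,\dots,m\}$ and let $c\in\mathbb{R}^n$. Consider the problem $$\text{(P)}\qquad \min_{x\in\mathbb{R}^n}\ c^Tx\quad \text{s.t. } x\in S,\quad Ax\in S\ \ \forall A\in U_m,$$ and the linear program, in the variables $x\in\mathbb{R}^n$, $\mu^{(i)}=(\mu^{(i)}_1,\dots,\mu^{(i)}_s)\in\mathbb{R}^s$ and $\eta_k^{(i)}\in\mathbb{R}^n$ ($i=1,\dots,r$, $k=1,\dots,m$), $$\text{(Q)}\qquad \begin{aligned}\min\quad & c^Tx\\ \text{s.t.}\quad & h_i^Tx\le b_i, && i=1,\dots,r,\\ & \textstyle\sum_{k=1}^m y_k^T\eta_k^{(i)}+\sum_{j=1}^s\mu_j^{(i)}v_j\le b_i, && i=1,\dots,r,\\ & \textstyle x h_i^T=\sum_{k=1}^m x_k\eta_k^{(i)T}+\sum_{j=1}^s \mu_j^{(i)}V_j^T,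 && i=1,\dots,r,\\ & \mu^{(i)}\ge 0, && i=1,\dots,r.\end{aligned}$$ Then the feasible set of (P) equals the projection onto $x$-space of the feasible set of (Q). In particular, the optimal values of (P) and (Q) are equal, and the optimal solutions of (P) are exactly the projections onto $x$-space of the optimal solutions of (Q).
   Context: Setting: an unknown linear dynamical system $x_{t+1}=A_\star x_t$ whose matrix $A_\star$ is known to lie in the polyhedral uncertainty set $U_0$; the measurements $(x_k,y_k)$ are the observed one-step transitions. Problem (P) asks for the cheapest point that stays in the safety region $S$ for one step under every matrix consistent with $U_0$ and the measurements. *)

theory Defs
  imports "HOL-Analysis.Analysis"
begin

text \<open>Index sets i = 0..r-1, j = 0..s-1, k = 0..m-1 (0-based instead of 1-based).
  Vectors in R^n are real^'n, n x n matrices are real^'n^'n.\<close>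

definition polyS :: "nat \<Rightarrow> (nat \<Rightarrow> real^'n) \<Rightarrow> (nat \<Rightarrow> real) \<Rightarrow> (real^'n) set" where
  "polyS r h b = {x. \<forall>i<r. h i \<bullet> x \<le> b i}"

definition polyU0 :: "nat \<Rightarrow> (nat \<Rightarrow> real^'n^'n) \<Rightarrow> (nat \<Rightarrow> real) \<Rightarrow> (real^'n^'n) set" where
  "polyU0 s V v = {A. \<forall>j<s. trace (transpose (V j) ** A) \<le> v j}"

definition polyUm :: "nat \<Rightarrow> (nat \<Rightarrow> real^'n^'n) \<Rightarrow> (nat \<Rightarrow> real) \<Rightarrow> nat \<Rightarrow> (nat \<Rightarrow> real^'n)
    \<Rightarrow> (nat \<Rightarrow> real^'n) \<Rightarrow> (real^'n^'n) set" where
  "polyUm s V v m xs ys = {A \<in> polyU0 s V v. \<forall>k<m. A *v xs k = ys k}"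

definition outer :: "real^'n \<Rightarrow> real^'n \<Rightarrow> real^'n^'n" where
  "outer x y = (\<chi> i j. x $ i * y $ j)"

definition feasP :: "nat \<Rightarrow> (nat \<Rightarrow> real^'n) \<Rightarrow> (nat \<Rightarrow> real) \<Rightarrow> (real^'n^'n) set \<Rightarrow> (real^'n) set" where
  "feasP r h b U = {x. x \<in> polyS r h b \<and> (\<forall>A\<in>U. A *v x \<in> polyS r h b)}"

text \<open>Feasible set of (Q): triples (x, mu, eta) with mu i j = mu^(i)_j and eta i k = eta^(i)_k.
  Values of mu, eta outside the index ranges are unconstrained.\<close>
definition feasQ :: "nat \<Rightarrow> (nat \<Rightarrow> real^'n) \<Rightarrow> (nat \<Rightarrow> real) \<Rightarrow> nat \<Rightarrow> (nat \<Rightarrow> real^'n^'n)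
    \<Rightarrow> (nat \<Rightarrow> real) \<Rightarrow> nat \<Rightarrow> (nat \<Rightarrow> real^'n) \<Rightarrow> (nat \<Rightarrow> real^'n)
    \<Rightarrow> ((real^'n) \<times> (nat \<Rightarrow> nat \<Rightarrow> real) \<times> (nat \<Rightarrow> nat \<Rightarrow> real^'n)) set" where
  "feasQ r h b s V v m xs ys = {(x, \<mu>, \<eta>).
     (\<forall>i<r. h i \<bullet> x \<le> b i) \<and>
     (\<forall>i<r. (\<Sum>k<m. ys k \<bullet> \<eta> i k) + (\<Sum>j<s. \<mu> i j * v j) \<le> b i) \<and>
     (\<forall>i<r. outer x (h i) = (\<Sum>k<m. outer (xs k) (\<eta> i k)) + (\<Sum>j<s. \<mu> i j *\<^sub>R transpose (V j))) \<and>
     (\<forall>i<r. \<forall>j<s. 0 \<le> \<mu> i j)}"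

end

theory Submission
  imports Defs
begin

text \<open>Write \<open>Z = A\<^sup>T\<close>. The robust constraint of row \<open>i\<close> in (P) says that the linear functional
  \<open>Z \<mapsto> \<langle>x h\<^sub>i\<^sup>T, Z\<rangle>\<close> is at most \<open>b\<^sub>i\<close> on the polyhedron
  \<open>{Z. \<langle>V\<^sub>j\<^sup>T, Z\<rangle> \<le> v\<^sub>j, Z\<^sup>T x\<^sub>k = y\<^sub>k}\<close>, which is nonempty since it contains \<open>A\<^sub>\<star>\<^sup>T\<close>.
  By the affine Farkas lemma this holds iff \<open>x h\<^sub>i\<^sup>T\<close> is a nonnegative combination of the
  \<open>V\<^sub>j\<^sup>T\<close> plus a combination \<open>\<Sum> x\<^sub>k \<eta>\<^sub>k\<^sup>T\<close> of the equality constraints whose right-hand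
  side \<open>\<Sum> y\<^sub>k\<^sup>T \<eta>\<^sub>k + \<Sum> \<mu>\<^sub>j v\<^sub>j\<close> is at most \<open>b\<^sub>i\<close>, i.e. iff the \<open>i\<close>-th block of (Q) is solvable.
  The Farkas lemma follows by separating \<open>(f, \<beta>)\<close> from the finitely generated, hence closed,
  cone of constraint pairs \<open>(g, d)\<close>.\<close>

lemma finite_convex_cone_separation:
  fixes G :: "'a::euclidean_space set"
  assumes "finite G" and "x \<notin> convex_cone hull G"
  obtains a where "\<And>g. g \<in> G \<Longrightarrow> 0 \<le> a \<bullet> g" and "a \<bullet> x < 0"
proof -
  obtain a c where ax: "a \<bullet> x < c" and above: "\<And>y. y \<in> convex_cone hull G \<Longrightarrow> c < a \<bullet> y"
    using separating_hyperplane_closed_point[OF convex_convex_cone_hull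
        closed_convex_cone_hull[OF \<open>finite G\<close>] \<open>x \<notin> convex_cone hull G\<close>]
    by blast
  have "c < 0"
    using above[OF convex_cone_hull_contains_0] by simp
  have "0 \<le> a \<bullet> g" if "g \<in> G" for g
  proof (rule ccontr)
    assume "\<not> 0 \<le> a \<bullet> g"
    then have "(c / (a \<bullet> g)) *\<^sub>R g \<in> convex_cone hull G"
      using \<open>c < 0\<close> that by (intro convex_cone_hull_mul hull_inc) (auto simp: divide_nonpos_neg)
    with above have "c < a \<bullet> ((c / (a \<bullet> g)) *\<^sub>R g)" by blast
    with \<open>\<not> 0 \<le> a \<bullet> g\<close> show False by simp
  qed
  with ax \<open>c < 0\<close> show thesis using that by force
qed

definition dual_combinations ::
    "'i set \<Rightarrow> ('i \<Rightarrow> 'a::euclidean_space) \<Rightarrow> ('i \<Rightarrow> real) \<Rightarrow>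
     'k set \<Rightarrow> ('k \<Rightarrow> 'a \<Rightarrow> 'b::euclidean_space) \<Rightarrow> ('k \<Rightarrow> 'b) \<Rightarrow> ('a \<times> real) set" where
  "dual_combinations I g d K L q = {(f, \<beta>). \<exists>\<mu> \<eta>. (\<forall>i\<in>I. 0 \<le> \<mu> i)
     \<and> f = (\<Sum>k\<in>K. adjoint (L k) (\<eta> k)) + (\<Sum>i\<in>I. \<mu> i *\<^sub>R g i)
     \<and> (\<Sum>k\<in>K. q k \<bullet> \<eta> k) + (\<Sum>i\<in>I. \<mu> i * d i) \<le> \<beta>}"

lemma convex_cone_dual_combinations:
  assumes linear: "\<And>k. k \<in> K \<Longrightarrow> linear (L k)"
  shows "convex_cone (dual_combinations I g d K L q)"
proof -
  have adjoint_linear_L: "linear (adjoint (L k))" if "k \<in> K" for k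
    using linear[OF that] by (rule adjoint_linear)
  show ?thesis
    unfolding convex_cone_iff
  proof (intro conjI ballI allI impI)
    show "0 \<in> dual_combinations I g d K L q"
      unfolding dual_combinations_def zero_prod_def
      by (auto intro!: exI[of _ "\<lambda>_. 0"] simp: linear_0 adjoint_linear_L)
  next
    fix w w' assume "w \<in> dual_combinations I g d K L q" "w' \<in> dual_combinations I g d K L q"
    then obtain \<mu> \<eta> \<mu>' \<eta>' where
      "\<forall>i\<in>I. 0 \<le> \<mu> i" "fst w = (\<Sum>k\<in>K. adjoint (L k) (\<eta> k)) + (\<Sum>i\<in>I. \<mu> i *\<^sub>R g i)"
      "(\<Sum>k\<in>K. q k \<bullet> \<eta> k) + (\<Sum>i\<in>I. \<mu> i * d i) \<le> snd w"
      "\<forall>i\<in>I. 0 \<le> \<mu>' i" "fst w' = (\<Sum>k\<in>K. adjoint (L k) (\<eta>' k)) + (\<Sum>i\<in>I. \<mu>' i *\<^sub>R g i)"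
      "(\<Sum>k\<in>K. q k \<bullet> \<eta>' k) + (\<Sum>i\<in>I. \<mu>' i * d i) \<le> snd w'"
      unfolding dual_combinations_def by auto
    then show "w + w' \<in> dual_combinations I g d K L q"
      unfolding dual_combinations_def
      by (auto intro!: exI[of _ "\<lambda>i. \<mu> i + \<mu>' i"] exI[of _ "\<lambda>k. \<eta> k + \<eta>' k"]
          simp: prod_eq_iff linear_add adjoint_linear_L sum.distrib algebra_simps)
  next
    fix w and t :: real assume "w \<in> dual_combinations I g d K L q" "0 \<le> t"
    then obtain \<mu> \<eta> where
      "\<forall>i\<in>I. 0 \<le> \<mu> i" "fst w = (\<Sum>k\<in>K. adjoint (L k) (\<eta> k)) + (\<Sum>i\<in>I. \<mu> i *\<^sub>R g i)"
      "(\<Sum>k\<in>K. q k \<bullet> \<eta> k) + (\<Sum>i\<in>I. \<mu> i * d i) \<le> snd w"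
      unfolding dual_combinations_def by auto
    moreover have "t * ((\<Sum>k\<in>K. q k \<bullet> \<eta> k) + (\<Sum>i\<in>I. \<mu> i * d i)) \<le> t * snd w"
      using calculation(3) \<open>0 \<le> t\<close> by (rule mult_left_mono)
    ultimately show "t *\<^sub>R w \<in> dual_combinations I g d K L q"
      unfolding dual_combinations_def using \<open>0 \<le> t\<close>
      by (auto intro!: exI[of _ "\<lambda>i. t * \<mu> i"] exI[of _ "\<lambda>k. t *\<^sub>R \<eta> k"]
          simp: prod_eq_iff linear_cmul adjoint_linear_L scaleR_sum_right sum_distrib_left
            algebra_simps)
  qed
qed

lemma convex_cone_hull_constraints_subset_dual_combinations:
  fixes g :: "'i \<Rightarrow> 'a::euclidean_space" and L :: "'k \<Rightarrow> 'a \<Rightarrow> 'b::euclidean_space"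
  assumes "finite I" and "finite K" and "\<And>k. k \<in> K \<Longrightarrow> linear (L k)"
  shows "convex_cone hull insert (0, 1) ((\<lambda>i. (g i, d i)) ` I \<union>
      (\<lambda>(k, e). (adjoint (L k) e, q k \<bullet> e)) ` (K \<times> E)) \<subseteq> dual_combinations I g d K L q"
proof (intro hull_minimal convex_cone_dual_combinations assms(3))
  have adjoint_0: "adjoint (L k) 0 = 0" if "k \<in> K" for k
    using assms(3)[OF that] by (simp add: adjoint_linear linear_0)
  have "(0, 1) \<in> dual_combinations I g d K L q"
    unfolding dual_combinations_def by (auto intro!: exI[of _ "\<lambda>_. 0"] simp: adjoint_0)
  moreover have "(g i, d i) \<in> dual_combinations I g d K L q" if "i \<in> I" for i
    unfolding dual_combinations_def using that \<open>finite I\<close>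
    by (auto intro!: exI[of _ "\<lambda>i'. if i' = i then 1 else 0 :: real"] exI[of _ "\<lambda>_. 0 :: 'b"]
        simp: adjoint_0 if_distrib[of "\<lambda>c. c *\<^sub>R _"] if_distrib[of "\<lambda>c. c * _"] cong: if_cong)
  moreover have "(adjoint (L k) e, q k \<bullet> e) \<in> dual_combinations I g d K L q" if "k \<in> K" for k e
    unfolding dual_combinations_def using that \<open>finite K\<close>
    by (auto intro!: exI[of _ "\<lambda>_. 0 :: real"] exI[of _ "\<lambda>k'. if k' = k then e else 0"]
        simp: adjoint_0 if_distrib[of "adjoint (L _)"] if_distrib[of "inner _"] cong: if_cong)
  ultimately show "insert (0, 1) ((\<lambda>i. (g i, d i)) ` I \<union>
      (\<lambda>(k, e). (adjoint (L k) e, q k \<bullet> e)) ` (K \<times> E)) \<subseteq> dual_combinations I g d K L q"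
    by auto
qed

lemma bounded_if_dual_combination:
  fixes g :: "'i \<Rightarrow> 'a::euclidean_space" and L :: "'k \<Rightarrow> 'a \<Rightarrow> 'b::euclidean_space"
  assumes linear: "\<And>k. k \<in> K \<Longrightarrow> linear (L k)"
    and "(f, \<beta>) \<in> dual_combinations I g d K L q"
    and z: "\<forall>i\<in>I. g i \<bullet> z \<le> d i" "\<forall>k\<in>K. L k z = q k"
  shows "f \<bullet> z \<le> \<beta>"
proof -
  obtain \<mu> \<eta> where \<mu>: "\<forall>i\<in>I. 0 \<le> \<mu> i"
    and f: "f = (\<Sum>k\<in>K. adjoint (L k) (\<eta> k)) + (\<Sum>i\<in>I. \<mu> i *\<^sub>R g i)"
    and \<beta>: "(\<Sum>k\<in>K. q k \<bullet> \<eta> k) + (\<Sum>i\<in>I. \<mu> i * d i) \<le> \<beta>"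
    using \<open>(f, \<beta>) \<in> dual_combinations I g d K L q\<close> unfolding dual_combinations_def by blast
  have "f \<bullet> z = (\<Sum>k\<in>K. \<eta> k \<bullet> L k z) + (\<Sum>i\<in>I. \<mu> i * (g i \<bullet> z))"
    unfolding f by (simp add: inner_add_left inner_sum_left adjoint_clauses linear)
  also have "\<dots> \<le> (\<Sum>k\<in>K. q k \<bullet> \<eta> k) + (\<Sum>i\<in>I. \<mu> i * d i)"
    using z \<mu> by (auto intro!: add_mono sum_mono mult_left_mono simp: inner_commute)
  finally show ?thesis
    using \<beta> by linarith
qed

text \<open>The hypotheses on \<open>(P, p)\<close> make the points \<open>(z\<^sub>0 - t P) / (1 + t p)\<close> feasible for
  every \<open>t \<ge> 0\<close>, and \<open>f\<close> exceeds \<open>\<beta>\<close> on them once \<open>t\<close> is large.\<close>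

lemma feasible_point_above_bound:
  fixes g :: "'i \<Rightarrow> 'a::euclidean_space" and L :: "'k \<Rightarrow> 'a \<Rightarrow> 'b::euclidean_space"
  assumes linear: "\<And>k. k \<in> K \<Longrightarrow> linear (L k)"
    and z\<^sub>0: "\<forall>i\<in>I. g i \<bullet> z\<^sub>0 \<le> d i" "\<forall>k\<in>K. L k z\<^sub>0 = q k"
    and "0 \<le> p" and g_P: "\<forall>i\<in>I. - (p * d i) \<le> g i \<bullet> P" and L_P: "\<forall>k\<in>K. L k P = - (p *\<^sub>R q k)"
    and neg: "P \<bullet> f + p * \<beta> < 0"
  obtains z where "\<forall>i\<in>I. g i \<bullet> z \<le> d i" and "\<forall>k\<in>K. L k z = q k" and "\<beta> < f \<bullet> z"
proof
  define \<delta> where "\<delta> = - (P \<bullet> f + p * \<beta>)"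
  define t where "t = (\<bar>f \<bullet> z\<^sub>0 - \<beta>\<bar> + 1) / \<delta>"
  define z where "z = (1 / (1 + t * p)) *\<^sub>R (z\<^sub>0 - t *\<^sub>R P)"
  have "0 < \<delta>" and "0 \<le> t"
    using neg by (auto simp: \<delta>_def t_def)
  then have "0 < 1 + t * p"
    using \<open>0 \<le> p\<close> by (simp add: add_pos_nonneg)
  have inner_z: "y \<bullet> z = (y \<bullet> z\<^sub>0 - t * (y \<bullet> P)) / (1 + t * p)" for y
    by (simp add: z_def inner_diff_right)
  show "\<forall>i\<in>I. g i \<bullet> z \<le> d i"
  proof
    fix i assume "i \<in> I"
    have "g i \<bullet> z\<^sub>0 - t * (g i \<bullet> P) \<le> (1 + t * p) * d i"
      using z\<^sub>0 g_P \<open>i \<in> I\<close> \<open>0 \<le> t\<close> mult_left_mono[of "- (p * d i)" "g i \<bullet> P" t]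
      by (auto simp: algebra_simps)
    with \<open>0 < 1 + t * p\<close> show "g i \<bullet> z \<le> d i"
      by (simp add: inner_z pos_divide_le_eq mult.commute)
  qed
  show "\<forall>k\<in>K. L k z = q k"
    using linear z\<^sub>0 L_P \<open>0 < 1 + t * p\<close>
    by (simp add: z_def linear_cmul linear_diff scaleR_add_left[symmetric] field_simps)
  have "t * \<delta> = \<bar>f \<bullet> z\<^sub>0 - \<beta>\<bar> + 1"
    using \<open>0 < \<delta>\<close> by (simp add: t_def)
  then have "(1 + t * p) * \<beta> < f \<bullet> z\<^sub>0 - t * (f \<bullet> P)"
    by (simp add: \<delta>_def inner_commute algebra_simps)
  with \<open>0 < 1 + t * p\<close> show "\<beta> < f \<bullet> z"
    by (simp add: inner_z pos_less_divide_eq mult.commute)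
qed

lemma separating_functional_if_not_dual_combination:
  fixes g :: "'i \<Rightarrow> 'a::euclidean_space" and L :: "'k \<Rightarrow> 'a \<Rightarrow> 'b::euclidean_space"
  assumes "finite I" and "finite K" and linear: "\<And>k. k \<in> K \<Longrightarrow> linear (L k)"
    and "(f, \<beta>) \<notin> dual_combinations I g d K L q"
  obtains P p where "0 \<le> p" and "\<forall>i\<in>I. - (p * d i) \<le> g i \<bullet> P"
    and "\<forall>k\<in>K. L k P = - (p *\<^sub>R q k)" and "P \<bullet> f + p * \<beta> < 0"
proof -
  \<comment> \<open>\<open>(0, 1)\<close> allows weakening \<open>\<beta>\<close>; the directions \<open>\<plusminus>e\<close> make the equality multipliers sign-free.\<close>
  define G where "G = insert (0, 1) ((\<lambda>i. (g i, d i)) ` I \<union>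
    (\<lambda>(k, e). (adjoint (L k) e, q k \<bullet> e)) ` (K \<times> (Basis \<union> uminus ` Basis)))"
  have "(f, \<beta>) \<notin> convex_cone hull G"
    using convex_cone_hull_constraints_subset_dual_combinations[where L = L, OF \<open>finite I\<close> \<open>finite K\<close> linear]
      \<open>(f, \<beta>) \<notin> dual_combinations I g d K L q\<close>
    unfolding G_def by blast
  moreover have "finite G"
    unfolding G_def using \<open>finite I\<close> \<open>finite K\<close> by simp
  ultimately obtain P p where nonneg_G: "\<And>w. w \<in> G \<Longrightarrow> 0 \<le> (P, p) \<bullet> w"
    and neg: "(P, p) \<bullet> (f, \<beta>) < 0"
    by (metis finite_convex_cone_separation surj_pair)
  have "0 \<le> p"
    using nonneg_G[of "(0, 1)"] unfolding G_def by simp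
  moreover have "\<forall>i\<in>I. - (p * d i) \<le> g i \<bullet> P"
  proof
    fix i assume "i \<in> I"
    then have "(g i, d i) \<in> G"
      unfolding G_def by blast
    from nonneg_G[OF this] show "- (p * d i) \<le> g i \<bullet> P"
      by (simp add: inner_commute)
  qed
  moreover have "\<forall>k\<in>K. L k P = - (p *\<^sub>R q k)"
  proof
    fix k assume "k \<in> K"
    show "L k P = - (p *\<^sub>R q k)"
    proof (rule euclidean_eqI)
      fix e :: 'b assume "e \<in> Basis"
      have "(adjoint (L k) e', q k \<bullet> e') \<in> G" if "e' \<in> {e, - e}" for e'
        unfolding G_def using \<open>k \<in> K\<close> \<open>e \<in> Basis\<close> that
        by (intro insertI2 UnI2 image_eqI[where x="(k, e')"]) auto
      then have "0 \<le> (P, p) \<bullet> (adjoint (L k) e, q k \<bullet> e)"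
        and "0 \<le> (P, p) \<bullet> (adjoint (L k) (- e), q k \<bullet> - e)"
        using nonneg_G by blast+
      then show "L k P \<bullet> e = - (p *\<^sub>R q k) \<bullet> e"
        using linear[OF \<open>k \<in> K\<close>] by (simp add: adjoint_clauses inner_commute)
    qed
  qed
  moreover have "P \<bullet> f + p * \<beta> < 0"
    using neg by simp
  ultimately show thesis
    by (rule that)
qed

lemma polyhedron_bound_iff_dual_combination:
  fixes g :: "'i \<Rightarrow> 'a::euclidean_space" and L :: "'k \<Rightarrow> 'a \<Rightarrow> 'b::euclidean_space"
  assumes "finite I" and "finite K" and linear: "\<And>k. k \<in> K \<Longrightarrow> linear (L k)"
    and z\<^sub>0: "\<forall>i\<in>I. g i \<bullet> z\<^sub>0 \<le> d i" "\<forall>k\<in>K. L k z\<^sub>0 = q k"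
  shows "(\<forall>z. (\<forall>i\<in>I. g i \<bullet> z \<le> d i) \<and> (\<forall>k\<in>K. L k z = q k) \<longrightarrow> f \<bullet> z \<le> \<beta>)
    \<longleftrightarrow> (f, \<beta>) \<in> dual_combinations I g d K L q"
proof
  assume bound: "\<forall>z. (\<forall>i\<in>I. g i \<bullet> z \<le> d i) \<and> (\<forall>k\<in>K. L k z = q k) \<longrightarrow> f \<bullet> z \<le> \<beta>"
  show "(f, \<beta>) \<in> dual_combinations I g d K L q"
  proof (rule ccontr)
    assume "(f, \<beta>) \<notin> dual_combinations I g d K L q"
    then obtain P p where "0 \<le> p" "\<forall>i\<in>I. - (p * d i) \<le> g i \<bullet> P"
      "\<forall>k\<in>K. L k P = - (p *\<^sub>R q k)" "P \<bullet> f + p * \<beta> < 0"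
      using separating_functional_if_not_dual_combination[where L = L, OF \<open>finite I\<close> \<open>finite K\<close> linear]
      by metis
    then obtain z where "\<forall>i\<in>I. g i \<bullet> z \<le> d i" "\<forall>k\<in>K. L k z = q k" "\<beta> < f \<bullet> z"
      using feasible_point_above_bound[where L = L, OF linear z\<^sub>0] by blast
    with bound show False
      by (meson not_le)
  qed
next
  assume "(f, \<beta>) \<in> dual_combinations I g d K L q"
  then show "\<forall>z. (\<forall>i\<in>I. g i \<bullet> z \<le> d i) \<and> (\<forall>k\<in>K. L k z = q k) \<longrightarrow> f \<bullet> z \<le> \<beta>"
    using bounded_if_dual_combination[where L = L, OF linear] by blast
qed

lemma inner_outer_left: "outer x y \<bullet> Z = y \<bullet> (transpose Z *v x)"
  unfolding outer_def inner_vec_def matrix_vector_mult_def transpose_def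
  by (simp add: sum_distrib_left mult_ac) (rule sum.swap)

lemma linear_transpose_mult_vec: "linear (\<lambda>Z::real^'n^'m. transpose Z *v x)"
  by (rule linearI) (simp_all add: vec_eq_iff matrix_vector_mult_def transpose_def sum.distrib
      sum_distrib_left algebra_simps)

lemma adjoint_transpose_mult_vec: "adjoint (\<lambda>Z. transpose Z *v x) = outer x"
  by (rule adjoint_unique) (metis inner_outer_left inner_commute)

lemma trace_mult_transpose: "trace (X ** transpose Y) = X \<bullet> (Y::real^'m^'n)"
  by (simp add: trace_def matrix_matrix_mult_def transpose_def inner_vec_def)

lemma robust_bound_iff_dual_combination:
  assumes "Astar \<in> polyUm s V v m xs ys"
  shows "(\<forall>A\<in>polyUm s V v m xs ys. a \<bullet> (A *v x) \<le> \<beta>) \<longleftrightarrow>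
    (outer x a, \<beta>) \<in> dual_combinations {..<s} (\<lambda>j. transpose (V j)) v {..<m} (\<lambda>k Z. transpose Z *v xs k) ys"
proof -
  \<comment> \<open>\<open>transpose_matrix_vector\<close> would turn \<open>transpose Z *v x\<close> into \<open>x v* Z\<close> and break the matching.\<close>
  have transpose_mem_polyUm: "transpose Z \<in> polyUm s V v m xs ys \<longleftrightarrow>
      (\<forall>j\<in>{..<s}. transpose (V j) \<bullet> Z \<le> v j) \<and> (\<forall>k\<in>{..<m}. transpose Z *v xs k = ys k)" for Z
    by (simp add: polyUm_def polyU0_def trace_mult_transpose Ball_def del: transpose_matrix_vector)
  have "(\<forall>A\<in>polyUm s V v m xs ys. a \<bullet> (A *v x) \<le> \<beta>) \<longleftrightarrow>
      (\<forall>Z. transpose Z \<in> polyUm s V v m xs ys \<longrightarrow> outer x a \<bullet> Z \<le> \<beta>)"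
    by (metis transpose_transpose inner_outer_left)
  also have "\<dots> \<longleftrightarrow> (outer x a, \<beta>)
      \<in> dual_combinations {..<s} (\<lambda>j. transpose (V j)) v {..<m} (\<lambda>k Z. transpose Z *v xs k) ys"
    unfolding transpose_mem_polyUm
    using assms transpose_mem_polyUm[of "transpose Astar"]
    by (intro polyhedron_bound_iff_dual_combination[where z\<^sub>0 = "transpose Astar"])
      (simp_all add: linear_transpose_mult_vec del: transpose_matrix_vector)
  finally show ?thesis .
qed

lemma mem_dual_combinations_transpose_mult_vec_iff:
  "(F, \<beta>) \<in> dual_combinations {..<s} (\<lambda>j. transpose (V j)) v {..<m} (\<lambda>k Z. transpose Z *v xs k) ys
    \<longleftrightarrow> (\<exists>\<mu> \<eta>. (\<forall>j<s. 0 \<le> \<mu> j) \<and> (\<Sum>k<m. ys k \<bullet> \<eta> k) + (\<Sum>j<s. \<mu> j * v j) \<le> \<beta>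
      \<and> F = (\<Sum>k<m. outer (xs k) (\<eta> k)) + (\<Sum>j<s. \<mu> j *\<^sub>R transpose (V j)))"
  unfolding dual_combinations_def adjoint_transpose_mult_vec by auto

lemma feasP_polyUm_iff:
  assumes "Astar \<in> polyUm s V v m xs ys"
  shows "x \<in> feasP r h b (polyUm s V v m xs ys) \<longleftrightarrow> x \<in> polyS r h b \<and> (\<forall>i<r. (outer x (h i), b i)
      \<in> dual_combinations {..<s} (\<lambda>j. transpose (V j)) v {..<m} (\<lambda>k Z. transpose Z *v xs k) ys)"
  using robust_bound_iff_dual_combination[OF assms] unfolding feasP_def polyS_def by blast

lemma fst_feasQ_iff:
  "x \<in> fst ` feasQ r h b s V v m xs ys \<longleftrightarrow> x \<in> polyS r h b \<and> (\<forall>i<r. (outer x (h i), b i)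
      \<in> dual_combinations {..<s} (\<lambda>j. transpose (V j)) v {..<m} (\<lambda>k Z. transpose Z *v xs k) ys)"
  (is "_ \<longleftrightarrow> _ \<and> (\<forall>i<r. ?certified i)")
proof -
  let ?row = "\<lambda>i \<mu> \<eta>. (\<forall>j<s. 0 \<le> \<mu> j) \<and> (\<Sum>k<m. ys k \<bullet> \<eta> k) + (\<Sum>j<s. \<mu> j * v j) \<le> b i
    \<and> outer x (h i) = (\<Sum>k<m. outer (xs k) (\<eta> k)) + (\<Sum>j<s. \<mu> j *\<^sub>R transpose (V j))"
  show ?thesis
  proof
    assume "x \<in> fst ` feasQ r h b s V v m xs ys"
    then obtain \<mu> \<eta> where "(x, \<mu>, \<eta>) \<in> feasQ r h b s V v m xs ys"
      by auto
    then have "x \<in> polyS r h b" and row: "\<forall>i<r. ?row i (\<mu> i) (\<eta> i)"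
      by (simp_all add: feasQ_def polyS_def)
    moreover have "?certified i" if "i < r" for i
      unfolding mem_dual_combinations_transpose_mult_vec_iff
      by (rule exI[of _ "\<mu> i"], rule exI[of _ "\<eta> i"]) (simp add: row that)
    ultimately show "x \<in> polyS r h b \<and> (\<forall>i<r. ?certified i)"
      by blast
  next
    assume x: "x \<in> polyS r h b \<and> (\<forall>i<r. ?certified i)"
    then have "\<forall>i<r. \<exists>\<mu> \<eta>. ?row i \<mu> \<eta>"
      unfolding mem_dual_combinations_transpose_mult_vec_iff by simp
    then have "\<exists>\<mu> \<eta>. \<forall>i<r. ?row i (\<mu> i) (\<eta> i)"
      by (simp only: choice_iff')
    then obtain \<mu> \<eta> where "\<forall>i<r. ?row i (\<mu> i) (\<eta> i)"
      by blast
    with x have "(x, \<mu>, \<eta>) \<in> feasQ r h b s V v m xs ys"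
      by (simp add: feasQ_def polyS_def)
    then show "x \<in> fst ` feasQ r h b s V v m xs ys"
      by force
  qed
qed

theorem theorem1:
  fixes r s m :: nat
    and h :: "nat \<Rightarrow> real^'n" and b :: "nat \<Rightarrow> real"
    and V :: "nat \<Rightarrow> real^'n^'n" and v :: "nat \<Rightarrow> real"
    and Astar :: "real^'n^'n"
    and xs ys :: "nat \<Rightarrow> real^'n" and c :: "real^'n"
  assumes Astar: "Astar \<in> polyU0 s V v"
    and ys: "\<And>k. k < m \<Longrightarrow> ys k = Astar *v xs k"
  defines "P \<equiv> feasP r h b (polyUm s V v m xs ys)"
    and "Q \<equiv> feasQ r h b s V v m xs ys"
  shows "P = fst ` Q \<and>
         (INF x\<in>P. ereal (c \<bullet> x)) = (INF z\<in>Q. ereal (c \<bullet> fst z)) \<and>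
         {x \<in> P. \<forall>x'\<in>P. c \<bullet> x \<le> c \<bullet> x'}
           = fst ` {z \<in> Q. \<forall>z'\<in>Q. c \<bullet> fst z \<le> c \<bullet> fst z'}"
proof -
  have "Astar \<in> polyUm s V v m xs ys"
    using Astar ys by (simp add: polyUm_def)
  have feasible_sets: "P = fst ` Q"
    unfolding P_def Q_def
    by (rule set_eqI) (simp only: feasP_polyUm_iff[OF \<open>Astar \<in> polyUm s V v m xs ys\<close>] fst_feasQ_iff)
  moreover have "(INF x\<in>P. ereal (c \<bullet> x)) = (INF z\<in>Q. ereal (c \<bullet> fst z))"
    unfolding feasible_sets by (simp add: image_image)
  moreover have "{x \<in> P. \<forall>x'\<in>P. c \<bullet> x \<le> c \<bullet> x'} = fst ` {z \<in> Q. \<forall>z'\<in>Q. c \<bullet> fst z \<le> c \<bullet> fst z'}"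
    unfolding feasible_sets by blast
  ultimately show ?thesis
    by blast
qed

end
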